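(* Let $T:\mathbb{R}^n\to\mathbb{R}^n$ be an averaged operator with $\mathrm{Fix}(T)\neq\emptyset$ and $\lim_{\|x\|\to\infty}\|x-T(x)\|=\infty$. Let $\{x^k\}$ be generated by the Safe-L2O method (described in the context) with $\alpha\in(0,1)$, where the safeguard sequence $\{\mu_k\}$ is updated by any one of the five schemes GS($\theta$), RT, AA, EMA($\theta$), RM($m$) defined in the context (with $\theta\in(0,1)$, $m\in\mathbb{N}$). Then: if the inequality $\|y^k-T(y^k)\|\le\alpha\mu_k$ holds for infinitely many $k$, we have $\mu_k\to0$. Consequently $\lim_{k\to\infty}d_{\mathrm{Fix}(T)}(x^k)=0$, and if $\{x^k\}$ has exactly one cluster point then $\{x^k\}$ converges to a point of $\mathrm{Fix}(T)$.
   Context: $\|\cdot\|$ is the Euclidean norm; $\mathrm{Fix}(T):=\{x:T(x)=x\}$; $d_C(x):=\inf\{\|x-y\|:y\in C\}$. $T$ is averaged if $T=(1-\lambda)\mathrm{Id}+\lambda Q$ with $\lambda\in(0,1)$ and $Q$ 1-Lipschitz. Safe-L2O method: fix maps $\mathcal{L}_k:\mathbb{R}^n\to\mathbb{R}^n$, the fallback operator $T$, $\alpha\in(0,1)$, $x^1\in\mathbb{R}^n$; set $\mu_1:=\|x^1-T(x^1)\|$. For $k=1,2,\dots$: $y^k:=\mathcal{L}_k(x^k)$; if $\|y^k-T(y^k)\|\le\alpha\mu_k$ set $x^{k+1}:=y^k$, else $x^{k+1}:=T(x^k)$; then compute $\mu_{k+1}$ by the chosen scheme. Write $r_j:=\|x^j-T(x^j)\|$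 and say that "sufficient descent occurs at step $k$" if $r_{k+1}\le\alpha\mu_k$. The schemes (in each, $\mu_{k+1}:=\mu_k$ whenever sufficient descent does not occur at step $k$): GS($\theta$): if sufficient descent occurs at step $k$, $\mu_{k+1}:=\theta\mu_k$. RT: if sufficient descent occurs at step $k$, $\mu_{k+1}:=r_{k+1}$. AA: with a counter $m_1:=0$; if sufficient descent occurs at step $k$, $\mu_{k+1}:=\frac{1}{m_k+1}(r_{k+1}+m_k\mu_k)$ and $m_{k+1}:=m_k+1$; otherwise $m_{k+1}:=m_k$. EMA($\theta$): if sufficient descent occurs at step $k$, $\mu_{k+1}:=\theta r_{k+1}+(1-\theta)\mu_k$. RM($m$): if sufficient descent occurs at step $k$, $\mu_{k+1}:=\max_{j\in\Xi_k} r_{j+1}$, where $\Xi_k$ is the set of the most recent $m$ indices $j\le k$ at which sufficient descent occurred (all such indices if there are fewer than $m$). *)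

theory Defs
  imports "HOL-Analysis.Analysis"
begin

definition Fix :: "('a \<Rightarrow> 'a) \<Rightarrow> 'a set" where
  "Fix T = {x. T x = x}"

definition averaged :: "('a::real_normed_vector \<Rightarrow> 'a) \<Rightarrow> bool" where
  "averaged T \<longleftrightarrow> (\<exists>lam Q. 0 < lam \<and> lam < 1 \<and>
      (\<forall>u v. norm (Q u - Q v) \<le> norm (u - v)) \<and>
      (\<forall>u. T u = (1 - lam) *\<^sub>R u + lam *\<^sub>R Q u))"

datatype scheme = GS real | RT | AA | EMA real | RM nat

definition valid_scheme :: "scheme \<Rightarrow> bool" where
  "valid_scheme s = (case s of
      GS \<theta> \<Rightarrow> 0 < \<theta> \<and> \<theta> < 1
    | EMA \<theta> \<Rightarrow> 0 < \<theta> \<and> \<theta> < 1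
    | RM m \<Rightarrow> 1 \<le> m
    | _ \<Rightarrow> True)"

definition res :: "('a::real_normed_vector \<Rightarrow> 'a) \<Rightarrow> 'a \<Rightarrow> real" where
  "res T v = norm (v - T v)"

definition suff_desc :: "('a::real_normed_vector \<Rightarrow> 'a) \<Rightarrow> real \<Rightarrow> (nat \<Rightarrow> 'a) \<Rightarrow> (nat \<Rightarrow> real) \<Rightarrow> nat \<Rightarrow> bool" where
  "suff_desc T \<alpha> x \<mu> k \<longleftrightarrow> res T (x (Suc k)) \<le> \<alpha> * \<mu> k"

definition desc_set :: "('a::real_normed_vector \<Rightarrow> 'a) \<Rightarrow> real \<Rightarrow> (nat \<Rightarrow> 'a) \<Rightarrow> (nat \<Rightarrow> real) \<Rightarrow> nat \<Rightarrow> nat set" where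
  "desc_set T \<alpha> x \<mu> k = {j. 1 \<le> j \<and> j \<le> k \<and> suff_desc T \<alpha> x \<mu> j}"

text \<open>The most recent m elements of a (finite) index set S (all of them if fewer than m).\<close>
definition recent :: "nat \<Rightarrow> nat set \<Rightarrow> nat set" where
  "recent m S = {j \<in> S. card {i \<in> S. j \<le> i} \<le> m}"

text \<open>mu_{k+1} computed from the scheme. For AA, the counter m_k equals the number of
  indices 1 <= j < k at which sufficient descent occurred (m_1 = 0, incremented exactly at
  sufficient-descent steps).\<close>
definition next_mu :: "scheme \<Rightarrow> ('a::real_normed_vector \<Rightarrow> 'a) \<Rightarrow> real \<Rightarrow> (nat \<Rightarrow> 'a) \<Rightarrow> (nat \<Rightarrow> real) \<Rightarrow> nat \<Rightarrow> real" where
  "next_mu s T \<alpha> x \<mu> k =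
    (if suff_desc T \<alpha> x \<mu> k then
       (case s of
          GS \<theta> \<Rightarrow> \<theta> * \<mu> k
        | RT \<Rightarrow> res T (x (Suc k))
        | AA \<Rightarrow> (let mk = card {j. 1 \<le> j \<and> j < k \<and> suff_desc T \<alpha> x \<mu> j}
                 in (res T (x (Suc k)) + real mk * \<mu> k) / (real mk + 1))
        | EMA \<theta> \<Rightarrow> \<theta> * res T (x (Suc k)) + (1 - \<theta>) * \<mu> k
        | RM m \<Rightarrow> Max ((\<lambda>j. res T (x (Suc j))) ` recent m (desc_set T \<alpha> x \<mu> k)))
     else \<mu> k)"

text \<open>The sequences x, y, mu (indexed from 1) are generated by the Safe-L2O method with
  learned maps L k, fallback operator T, parameter alpha and safeguard scheme s.\<close>
definition safe_l2o :: "('a::real_normed_vector \<Rightarrow> 'a) \<Rightarrow> (nat \<Rightarrow> 'a \<Rightarrow> 'a) \<Rightarrow> real \<Rightarrow> scheme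
    \<Rightarrow> (nat \<Rightarrow> 'a) \<Rightarrow> (nat \<Rightarrow> 'a) \<Rightarrow> (nat \<Rightarrow> real) \<Rightarrow> bool" where
  "safe_l2o T L \<alpha> s x y \<mu> \<longleftrightarrow>
     \<mu> 1 = res T (x 1) \<and>
     (\<forall>k\<ge>1. y k = L k (x k) \<and>
             x (Suc k) = (if res T (y k) \<le> \<alpha> * \<mu> k then y k else T (x k)) \<and>
             \<mu> (Suc k) = next_mu s T \<alpha> x \<mu> k)"

end

theory Submission
  imports Defs
begin

text \<open>
  In every scheme \<open>\<mu>\<close> is nonincreasing and nonnegative, so it converges to some \<open>l \<ge> 0\<close>.
  Infinitely many descent steps force \<open>l = 0\<close>: for GS, RT, EMA and RM every descent step
  \<open>k \<ge> K\<close> gives \<open>\<mu> (k + 1) \<le> c \<mu> K\<close> for a fixed \<open>c < 1\<close>, while for AA each descent step lowers \<open>\<mu>\<close>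
  by at least \<open>(1 - \<alpha>) l / (n + 1)\<close>, \<open>n\<close> the number of earlier descent steps, and the harmonic
  series diverges. Fallback steps do not increase the residual \<open>\<parallel>x - T x\<parallel>\<close> (\<open>T\<close> is nonexpansive)
  and accepted steps bound it by \<open>\<alpha> \<mu> k\<close>, so the residual tends to 0. By coercivity of the
  residual the iterates stay bounded, and by continuity every cluster point is a fixed point;
  hence the distance of \<open>x k\<close> to \<open>Fix T\<close> tends to 0, and \<open>x\<close> converges when the cluster point
  is unique.
\<close>

lemma limit_eq_0_if_contracted:
  fixes \<mu> :: "nat \<Rightarrow> real"
  assumes "\<mu> \<longlonglongrightarrow> l" "0 \<le> l" "c < 1" "\<And>K. 1 \<le> K \<Longrightarrow> l \<le> c * \<mu> K"
  shows "l = 0"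
proof -
  have "(\<lambda>K. c * \<mu> K) \<longlonglongrightarrow> c * l" by (intro tendsto_intros assms(1))
  then have "l \<le> c * l" using assms(4) by (intro LIMSEQ_le_const) auto
  then show ?thesis using assms(2,3) by (simp add: mult_le_cancel_right1)
qed

lemma bounded_range_if_coercive:
  fixes g :: "'a::real_normed_vector \<Rightarrow> real"
  assumes "filterlim g at_top at_infinity" "(\<lambda>k. g (x k)) \<longlonglongrightarrow> l"
  shows "bounded (range x)"
proof -
  obtain B where B: "\<And>k. g (x k) \<le> B"
    using convergent_imp_bounded[OF assms(2)] by (force simp: bounded_iff abs_le_iff)
  have "eventually (\<lambda>z. B + 1 \<le> g z) at_infinity"
    using assms(1) unfolding filterlim_at_top by blast
  then obtain b where b: "\<And>z. b \<le> norm z \<Longrightarrow> B + 1 \<le> g z"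
    unfolding eventually_at_infinity by blast
  have "norm (x k) \<le> b" for k
    using b[of "x k"] B[of k] by force
  then show ?thesis by (auto simp: bounded_iff)
qed

lemma limit_point_in_zero_set:
  fixes f :: "'a::topological_space \<Rightarrow> 'b::t2_space" and r :: "nat \<Rightarrow> nat"
  assumes "continuous_on UNIV f" "(\<lambda>k. f (x k)) \<longlonglongrightarrow> c"
    "strict_mono r" "(x \<circ> r) \<longlonglongrightarrow> q"
  shows "f q = c"
proof -
  have "(\<lambda>n. f ((x \<circ> r) n)) \<longlonglongrightarrow> f q"
    using continuous_on_tendsto_compose[OF assms(1) assms(4)] by simp
  moreover have "(\<lambda>n. f ((x \<circ> r) n)) \<longlonglongrightarrow> c"
    using LIMSEQ_subseq_LIMSEQ[OF assms(2,3)] by (simp add: o_def)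
  ultimately show ?thesis using LIMSEQ_unique by blast
qed

lemma tendsto_0_if_vanishes_at_limit_points:
  fixes x :: "nat \<Rightarrow> 'a::heine_borel" and f :: "'a \<Rightarrow> real"
  assumes "bounded (range x)" "continuous_on UNIV f" "\<And>z. 0 \<le> f z"
    and vanish: "\<And>r q. strict_mono (r :: nat \<Rightarrow> nat) \<Longrightarrow> (x \<circ> r) \<longlonglongrightarrow> q \<Longrightarrow> f q = 0"
  shows "(\<lambda>k. f (x k)) \<longlonglongrightarrow> 0"
proof (rule LIMSEQ_I, rule ccontr)
  fix e :: real assume e: "0 < e" and "\<not> (\<exists>no. \<forall>n\<ge>no. norm (f (x n) - 0) < e)"
  then have "infinite {k. e \<le> f (x k)}"
    unfolding infinite_nat_iff_unbounded_le using assms(3) by (auto simp: not_less)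
  then obtain r :: "nat \<Rightarrow> nat" where r: "strict_mono r" "\<And>n. e \<le> f (x (r n))"
    using infinite_enumerate by blast
  have "bounded (range (x \<circ> r))"
    using assms(1) by (rule bounded_subset) auto
  then obtain q r' where r': "strict_mono r'" "(x \<circ> r \<circ> r') \<longlonglongrightarrow> q"
    using bounded_imp_convergent_subsequence by blast
  have "(\<lambda>n. f ((x \<circ> r \<circ> r') n)) \<longlonglongrightarrow> f q"
    using continuous_on_tendsto_compose[OF assms(2) r'(2)] by simp
  then have "e \<le> f q"
    using r(2) by (intro LIMSEQ_le_const) auto
  moreover have "f q = 0"
    using vanish[of "r \<circ> r'"] r(1) r' by (simp add: strict_mono_o o_assoc)
  ultimately show False using e by simp
qed

lemma tendsto_if_unique_limit_point:
  fixes x :: "nat \<Rightarrow> 'a::{heine_borel, real_normed_vector}"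
  assumes "bounded (range x)"
    and unique: "\<And>r q. strict_mono (r :: nat \<Rightarrow> nat) \<Longrightarrow> (x \<circ> r) \<longlonglongrightarrow> q \<Longrightarrow> q = p"
  shows "x \<longlonglongrightarrow> p"
proof -
  have "(\<lambda>k. norm (x k - p)) \<longlonglongrightarrow> 0"
    using unique by (intro tendsto_0_if_vanishes_at_limit_points[OF assms(1)] continuous_intros) auto
  then show ?thesis by (simp add: tendsto_norm_zero_iff LIM_zero_iff)
qed

lemma averaged_imp_nonexpansive:
  assumes "averaged T"
  shows "norm (T u - T v) \<le> norm (u - v)"
proof -
  obtain lam Q where lam: "0 < lam" "lam < 1"
    and Q: "\<And>u v. norm (Q u - Q v) \<le> norm (u - v)"
    and T: "\<And>u. T u = (1 - lam) *\<^sub>R u + lam *\<^sub>R Q u"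
    using assms unfolding averaged_def by blast
  have "T u - T v = (1 - lam) *\<^sub>R (u - v) + lam *\<^sub>R (Q u - Q v)"
    by (simp add: T algebra_simps)
  then have "norm (T u - T v) \<le> (1 - lam) * norm (u - v) + lam * norm (Q u - Q v)"
    using norm_triangle_ineq[of "(1 - lam) *\<^sub>R (u - v)" "lam *\<^sub>R (Q u - Q v)"] lam by simp
  also have "\<dots> \<le> (1 - lam) * norm (u - v) + lam * norm (u - v)"
    using Q lam by (simp add: mult_left_mono)
  finally show ?thesis by (simp add: algebra_simps)
qed

lemma averaged_imp_continuous_on:
  assumes "averaged T"
  shows "continuous_on UNIV T"
proof (rule lipschitz_on_continuous_on)
  show "1-lipschitz_on UNIV T"
    using averaged_imp_nonexpansive[OF assms] by (intro lipschitz_onI) (auto simp: dist_norm)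
qed

lemma res_nonneg: "0 \<le> res T v"
  by (simp add: res_def)

lemma res_nonexpansive_step:
  assumes "averaged T"
  shows "res T (T z) \<le> res T z"
  using averaged_imp_nonexpansive[OF assms, of z "T z"] by (simp add: res_def)

lemma recent_subset: "recent m S \<subseteq> S"
  by (auto simp: recent_def)

lemma finite_recent: "finite S \<Longrightarrow> finite (recent m S)"
  using finite_subset[OF recent_subset] .

lemma recent_insert_subset:
  assumes "finite S"
  shows "recent m (insert k S) \<subseteq> insert k (recent m S)"
proof
  fix j assume j: "j \<in> recent m (insert k S)"
  show "j \<in> insert k (recent m S)"
  proof (cases "j = k")
    case False
    then have "j \<in> S" using j by (auto simp: recent_def)
    moreover have "card {i \<in> S. j \<le> i} \<le> card {i \<in> insert k S. j \<le> i}"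
      by (rule card_mono) (use assms in auto)
    ultimately show ?thesis using j by (auto simp: recent_def)
  qed simp
qed

lemma Max_in_recent:
  assumes "finite S" "S \<noteq> {}" "1 \<le> m"
  shows "Max S \<in> recent m S"
proof -
  have "{i \<in> S. Max S \<le> i} = {Max S}"
    using Max_in[OF assms(1,2)] Max_ge[OF assms(1)] by (auto intro: antisym)
  then show ?thesis using Max_in[OF assms(1,2)] assms(3) by (simp add: recent_def)
qed

lemma ge_of_mem_recent:
  assumes "finite S" "B \<subseteq> S" "card B = m" "\<forall>b\<in>B. K \<le> b" "j \<in> recent m S"
  shows "K \<le> j"
proof (rule ccontr)
  assume "\<not> K \<le> j"
  then have "j \<notin> B" "insert j B \<subseteq> {i \<in> S. j \<le> i}"
    using assms(2,4,5) by (auto simp: recent_def)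
  then have "m + 1 \<le> card {i \<in> S. j \<le> i}"
    using card_mono[OF _ \<open>insert j B \<subseteq> _\<close>] assms(1,3) finite_subset[OF assms(2,1)] by auto
  then show False using assms(5) by (simp add: recent_def)
qed

lemma finite_desc_set: "finite (desc_set T \<alpha> x \<mu> k)"
  by (rule finite_subset[of _ "{..k}"]) (auto simp: desc_set_def)

lemma desc_set_eq_if:
  assumes "1 \<le> k"
  shows "desc_set T \<alpha> x \<mu> k =
    (if suff_desc T \<alpha> x \<mu> k then insert k (desc_set T \<alpha> x \<mu> (k - 1)) else desc_set T \<alpha> x \<mu> (k - 1))"
proof -
  obtain n where "k = Suc n" using assms by (cases k) auto
  then show ?thesis by (auto simp: desc_set_def le_Suc_eq)
qed

lemma card_descents_eq_Suc:
  assumes "1 \<le> k" "suff_desc T \<alpha> x \<mu> k"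
  shows "card (desc_set T \<alpha> x \<mu> k) = Suc (card (desc_set T \<alpha> x \<mu> (k - 1)))"
proof -
  have "k \<notin> desc_set T \<alpha> x \<mu> (k - 1)" using assms(1) unfolding desc_set_def by auto
  then show ?thesis
    using desc_set_eq_if[OF assms(1), of T \<alpha> x \<mu>] assms(2) finite_desc_set[of T \<alpha> x \<mu> "k - 1"]
    by simp
qed

lemma card_descents_before_eq:
  "card {j. 1 \<le> j \<and> j < k \<and> suff_desc T \<alpha> x \<mu> j} = card (desc_set T \<alpha> x \<mu> (k - 1))"
  unfolding desc_set_def by (rule arg_cong[of _ _ card]) auto

locale safe_l2o_run =
  fixes T :: "'a::real_normed_vector \<Rightarrow> 'a" and L :: "nat \<Rightarrow> 'a \<Rightarrow> 'a"
    and \<alpha> :: real and s :: scheme and x y :: "nat \<Rightarrow> 'a" and \<mu> :: "nat \<Rightarrow> real"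
  assumes averaged: "averaged T" and alpha_pos: "0 < \<alpha>" and alpha_lt_1: "\<alpha> < 1"
    and valid: "valid_scheme s" and run: "safe_l2o T L \<alpha> s x y \<mu>"
begin

abbreviation descent :: "nat \<Rightarrow> bool" where
  "descent \<equiv> suff_desc T \<alpha> x \<mu>"

abbreviation descents :: "nat \<Rightarrow> nat set" where
  "descents \<equiv> desc_set T \<alpha> x \<mu>"

lemma mu_1: "\<mu> 1 = res T (x 1)"
  using run unfolding safe_l2o_def by blast

lemma x_Suc: "1 \<le> k \<Longrightarrow> x (Suc k) = (if res T (y k) \<le> \<alpha> * \<mu> k then y k else T (x k))"
  using run unfolding safe_l2o_def by blast

lemma mu_Suc: "1 \<le> k \<Longrightarrow> \<mu> (Suc k) = next_mu s T \<alpha> x \<mu> k"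
  using run unfolding safe_l2o_def by blast

lemma descent_if_accepted: "1 \<le> k \<Longrightarrow> res T (y k) \<le> \<alpha> * \<mu> k \<Longrightarrow> descent k"
  by (simp add: x_Suc suff_desc_def)

lemma frequent_descent_if_frequently_accepted:
  assumes "\<exists>\<^sub>F k in sequentially. res T (y k) \<le> \<alpha> * \<mu> k"
  shows "\<exists>\<^sub>F k in sequentially. descent k"
proof (rule frequently_mp[OF _ assms])
  show "\<forall>\<^sub>F k in sequentially. res T (y k) \<le> \<alpha> * \<mu> k \<longrightarrow> descent k"
    using eventually_ge_at_top[of 1] by eventually_elim (simp add: descent_if_accepted)
qed

lemma x_Suc_if_not_descent: "1 \<le> k \<Longrightarrow> \<not> descent k \<Longrightarrow> x (Suc k) = T (x k)"
  using descent_if_accepted[of k] x_Suc[of k] by auto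

lemma mu_Suc_if_not_descent: "1 \<le> k \<Longrightarrow> \<not> descent k \<Longrightarrow> \<mu> (Suc k) = \<mu> k"
  by (simp add: mu_Suc next_mu_def)

lemma res_Suc_le: "1 \<le> k \<Longrightarrow> res T (x (Suc k)) \<le> max (\<alpha> * \<mu> k) (res T (x k))"
  using x_Suc_if_not_descent[of k] res_nonexpansive_step[OF averaged, of "x k"]
  by (cases "descent k") (auto simp: suff_desc_def)

lemma AA_descent_step:
  assumes "s = AA" "1 \<le> k" "descent k" "l \<le> \<mu> k"
  shows "\<mu> (Suc k) \<le> \<mu> k - (1 - \<alpha>) * l / (card (descents (k - 1)) + 1)"
proof -
  define c where "c = real (card (descents (k - 1)))"
  have "res T (x (Suc k)) + c * \<mu> k \<le> (c + 1) * \<mu> k - (1 - \<alpha>) * l"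
    using assms(3,4) alpha_lt_1 mult_left_mono[OF assms(4), of "1 - \<alpha>"]
    by (simp add: suff_desc_def algebra_simps)
  then have "(res T (x (Suc k)) + c * \<mu> k) / (c + 1) \<le> ((c + 1) * \<mu> k - (1 - \<alpha>) * l) / (c + 1)"
    by (intro divide_right_mono) (auto simp: c_def)
  also have "\<dots> = \<mu> k - (1 - \<alpha>) * l / (c + 1)"
    by (simp add: c_def field_simps)
  finally have "(res T (x (Suc k)) + c * \<mu> k) / (c + 1) \<le> \<mu> k - (1 - \<alpha>) * l / (c + 1)" .
  moreover have "\<mu> (Suc k) = (res T (x (Suc k)) + c * \<mu> k) / (c + 1)"
    using assms(1,3) unfolding mu_Suc[OF assms(2)] next_mu_def card_descents_before_eq
    by (simp add: Let_def c_def)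
  ultimately show ?thesis by (simp add: c_def ac_simps)
qed

lemma RM_window_contains_descent:
  assumes "s = RM m" "1 \<le> k" "descent k"
  shows "k \<in> recent m (descents k)"
proof -
  have "1 \<le> m" using valid assms(1) by (simp add: valid_scheme_def)
  have "k \<in> descents k" using assms(2,3) by (simp add: desc_set_def)
  moreover have "Max (descents k) = k"
    using \<open>k \<in> descents k\<close> by (intro Max_eqI finite_desc_set) (auto simp: desc_set_def)
  ultimately show ?thesis using Max_in_recent[OF finite_desc_set _ \<open>1 \<le> m\<close>] by fastforce
qed

lemma mu_ge_RM_window:
  assumes "s = RM m" "1 \<le> k"
  shows "\<forall>j\<in>recent m (descents (k - 1)). res T (x (Suc j)) \<le> \<mu> k"
  using assms(2)
proof (induction k rule: dec_induct)
  case base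
  then show ?case by (simp add: desc_set_def recent_def)
next
  case (step k)
  show ?case
  proof (cases "descent k")
    case False
    then show ?thesis using step mu_Suc_if_not_descent desc_set_eq_if[OF step(1), of T \<alpha> x \<mu>] by simp
  next
    case True
    have "finite (recent m (descents k))" by (simp add: finite_recent finite_desc_set)
    then show ?thesis
      using True step(1) assms(1) by (simp add: mu_Suc next_mu_def)
  qed
qed

lemma mu_nonneg: "1 \<le> k \<Longrightarrow> 0 \<le> \<mu> k"
proof (induction k rule: dec_induct)
  case base
  then show ?case by (metis One_nat_def mu_1 res_nonneg)
next
  case (step k)
  have res_Suc: "0 \<le> res T (x (Suc k))" by (rule res_nonneg)
  show ?case
  proof (cases "descent k")
    case False
    then show ?thesis using step mu_Suc_if_not_descent by simp
  next
    case True
    show ?thesis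
    proof (cases s)
      case (RM m)
      have "res T (x (Suc k)) \<le> Max ((\<lambda>j. res T (x (Suc j))) ` recent m (descents k))"
        using RM_window_contains_descent[OF RM step(1) True]
        by (intro Max_ge finite_imageI finite_recent finite_desc_set) auto
      then have "0 \<le> Max ((\<lambda>j. res T (x (Suc j))) ` recent m (descents k))"
        by (rule order_trans[OF res_nonneg])
      then show ?thesis using RM True step(1) by (simp add: mu_Suc next_mu_def)
    qed (use True step(1,3) res_Suc valid in
          \<open>simp_all add: mu_Suc next_mu_def valid_scheme_def Let_def\<close>)
  qed
qed

lemma mu_Suc_le:
  assumes "1 \<le> k"
  shows "\<mu> (Suc k) \<le> \<mu> k"
proof (cases "descent k")
  case False
  then show ?thesis using mu_Suc_if_not_descent assms by simp
next
  case True
  have "res T (x (Suc k)) \<le> \<alpha> * \<mu> k" using True by (simp add: suff_desc_def)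
  also have "\<dots> \<le> \<mu> k" using mu_nonneg[OF assms] alpha_pos alpha_lt_1 by (simp add: mult_left_le_one_le)
  finally have res_le: "res T (x (Suc k)) \<le> \<mu> k" .
  show ?thesis
  proof (cases s)
    case (GS \<theta>)
    then show ?thesis using True assms valid mu_nonneg[OF assms]
      by (simp add: mu_Suc next_mu_def valid_scheme_def mult_left_le_one_le)
  next
    case (EMA \<theta>)
    then have "\<theta> * res T (x (Suc k)) + (1 - \<theta>) * \<mu> k \<le> \<theta> * \<mu> k + (1 - \<theta>) * \<mu> k"
      using res_le valid by (simp add: valid_scheme_def)
    then show ?thesis using EMA True assms by (simp add: mu_Suc next_mu_def algebra_simps)
  next
    case (RM m)
    have "recent m (descents k) \<subseteq> insert k (recent m (descents (k - 1)))"
      using desc_set_eq_if[OF assms, of T \<alpha> x \<mu>] True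
        recent_insert_subset[OF finite_desc_set, of m k T \<alpha> x \<mu> "k - 1"] by simp
    then have "\<forall>j\<in>recent m (descents k). res T (x (Suc j)) \<le> \<mu> k"
      using mu_ge_RM_window[OF RM assms] res_le by auto
    moreover have "recent m (descents k) \<noteq> {}"
      using RM_window_contains_descent[OF RM assms True] by blast
    ultimately show ?thesis
      using RM True assms by (simp add: mu_Suc next_mu_def finite_recent finite_desc_set)
  next
    case RT
    then show ?thesis using True assms res_le by (simp add: mu_Suc next_mu_def)
  next
    case AA
    then show ?thesis using AA_descent_step[OF AA assms True mu_nonneg[OF assms]] by simp
  qed
qed

lemma mu_antimono:
  assumes "1 \<le> i" "i \<le> j"
  shows "\<mu> j \<le> \<mu> i"
  using assms(2)
proof (induction j rule: dec_induct)
  case (step j)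
  then show ?case using mu_Suc_le[of j] assms(1) by simp
qed simp

lemma mu_converges: "\<exists>l. \<mu> \<longlonglongrightarrow> l \<and> 0 \<le> l \<and> (\<forall>k\<ge>1. l \<le> \<mu> k)"
proof -
  have "decseq (\<lambda>k. \<mu> (Suc k))" unfolding decseq_Suc_iff using mu_Suc_le by simp
  moreover have "\<forall>k. 0 \<le> \<mu> (Suc k)" using mu_nonneg by simp
  ultimately obtain l where lim: "(\<lambda>k. \<mu> (Suc k)) \<longlonglongrightarrow> l" and le: "\<forall>k. l \<le> \<mu> (Suc k)"
    using decseq_convergent by blast
  have "\<forall>k\<ge>1. l \<le> \<mu> k" using le by (metis Suc_pred' less_eq_Suc_le One_nat_def)
  moreover have "0 \<le> l" using LIMSEQ_le_const[OF lim] mu_nonneg by simp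
  ultimately show ?thesis using LIMSEQ_imp_Suc[OF lim] by blast
qed

lemma AA_harmonic_bound:
  assumes "s = AA" "\<forall>k\<ge>1. l \<le> \<mu> k" "1 \<le> k"
  shows "\<mu> k + (1 - \<alpha>) * l * harm (card (descents (k - 1))) \<le> \<mu> 1"
  using assms(3)
proof (induction k rule: dec_induct)
  case base
  have "descents 0 = {}" by (simp add: desc_set_def)
  then show ?case by (simp add: harm_def)
next
  case (step k)
  show ?case
  proof (cases "descent k")
    case False
    then show ?thesis
      using step mu_Suc_if_not_descent desc_set_eq_if[OF step(1), of T \<alpha> x \<mu>] by simp
  next
    case True
    define n where "n = card (descents (k - 1))"
    have "(1 - \<alpha>) * l * harm (card (descents k)) = (1 - \<alpha>) * l * harm n + (1 - \<alpha>) * l / (n + 1)"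
      using card_descents_eq_Suc[OF step(1) True]
      by (simp add: n_def harm_Suc inverse_eq_divide distrib_left add.commute)
    moreover have "\<mu> (Suc k) \<le> \<mu> k - (1 - \<alpha>) * l / (n + 1)"
      using AA_descent_step[OF assms(1) step(1) True] assms(2) step(1) by (simp add: n_def)
    ultimately show ?thesis using step.IH by (simp add: n_def)
  qed
qed

end

locale safe_l2o_descending = safe_l2o_run +
  assumes frequent_descent: "\<exists>\<^sub>F k in sequentially. suff_desc T \<alpha> x \<mu> k"
begin

lemma descent_beyond: "\<exists>k\<ge>K. 1 \<le> k \<and> descent k"
  using frequent_descent unfolding frequently_sequentially by (metis max.bounded_iff)

lemma infinite_descents_beyond: "infinite {j. K \<le> j \<and> descent j}"
  unfolding infinite_nat_iff_unbounded_le using descent_beyond by (metis max.bounded_iff mem_Collect_eq)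

lemma mu_tendsto_0_if_contracting:
  assumes "c < 1" and contract: "\<And>K. 1 \<le> K \<Longrightarrow> \<exists>k\<ge>K. \<mu> (Suc k) \<le> c * \<mu> K"
  shows "\<mu> \<longlonglongrightarrow> 0"
proof -
  obtain l where l: "\<mu> \<longlonglongrightarrow> l" "0 \<le> l" "\<forall>k\<ge>1. l \<le> \<mu> k"
    using mu_converges by blast
  have "l = 0"
  proof (rule limit_eq_0_if_contracted[OF l(1,2) assms(1)])
    fix K :: nat assume "1 \<le> K"
    then obtain k where "K \<le> k" "\<mu> (Suc k) \<le> c * \<mu> K" using contract by blast
    moreover have "l \<le> \<mu> (Suc k)" using l(3) by simp
    ultimately show "l \<le> c * \<mu> K" by linarith
  qed
  then show ?thesis using l(1) by simp
qed

lemma GS_contracting: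
  assumes "s = GS \<theta>" "1 \<le> K"
  shows "\<exists>k\<ge>K. \<mu> (Suc k) \<le> \<theta> * \<mu> K"
proof -
  obtain k where k: "K \<le> k" "descent k" using descent_beyond by blast
  have "\<mu> (Suc k) = \<theta> * \<mu> k" using assms k by (simp add: mu_Suc next_mu_def)
  also have "\<dots> \<le> \<theta> * \<mu> K"
    using mu_antimono[OF assms(2) k(1)] valid assms(1) by (simp add: valid_scheme_def)
  finally show ?thesis using k(1) by blast
qed

lemma RT_contracting:
  assumes "s = RT" "1 \<le> K"
  shows "\<exists>k\<ge>K. \<mu> (Suc k) \<le> \<alpha> * \<mu> K"
proof -
  obtain k where k: "K \<le> k" "descent k" using descent_beyond by blast
  have "\<mu> (Suc k) = res T (x (Suc k))" using assms k by (simp add: mu_Suc next_mu_def)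
  also have "\<dots> \<le> \<alpha> * \<mu> k" using k(2) by (simp add: suff_desc_def)
  also have "\<dots> \<le> \<alpha> * \<mu> K" using mu_antimono[OF assms(2) k(1)] alpha_pos by simp
  finally show ?thesis using k(1) by blast
qed

lemma EMA_contracting:
  assumes "s = EMA \<theta>" "1 \<le> K"
  shows "\<exists>k\<ge>K. \<mu> (Suc k) \<le> (1 - \<theta> * (1 - \<alpha>)) * \<mu> K"
proof -
  have \<theta>: "0 < \<theta>" "\<theta> < 1" using valid assms(1) by (auto simp: valid_scheme_def)
  then have "0 \<le> 1 - \<theta> * (1 - \<alpha>)"
    using alpha_pos alpha_lt_1 by (simp add: mult_le_one)
  obtain k where k: "K \<le> k" "descent k" using descent_beyond by blast
  have "\<mu> (Suc k) = \<theta> * res T (x (Suc k)) + (1 - \<theta>) * \<mu> k"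
    using assms k by (simp add: mu_Suc next_mu_def)
  also have "\<dots> \<le> \<theta> * (\<alpha> * \<mu> k) + (1 - \<theta>) * \<mu> k"
    using k(2) \<theta> by (simp add: suff_desc_def)
  also have "\<dots> = (1 - \<theta> * (1 - \<alpha>)) * \<mu> k" by (simp add: algebra_simps)
  also have "\<dots> \<le> (1 - \<theta> * (1 - \<alpha>)) * \<mu> K"
    using mu_antimono[OF assms(2) k(1)] \<open>0 \<le> 1 - \<theta> * (1 - \<alpha>)\<close> by (rule mult_left_mono)
  finally show ?thesis using k(1) by blast
qed

text \<open>Choosing \<open>m\<close> descent steps beyond \<open>K\<close>, the window of the last of them contains only
  steps beyond \<open>K\<close>, whose residuals are at most \<open>\<alpha> \<mu> K\<close>.\<close>
lemma RM_contracting: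
  assumes "s = RM m" "1 \<le> K"
  shows "\<exists>k\<ge>K. \<mu> (Suc k) \<le> \<alpha> * \<mu> K"
proof -
  have "1 \<le> m" using valid assms(1) by (simp add: valid_scheme_def)
  obtain B where B: "finite B" "card B = m" "B \<subseteq> {j. K \<le> j \<and> descent j}"
    using infinite_arbitrarily_large[OF infinite_descents_beyond] by blast
  define k where "k = Max B"
  have "B \<noteq> {}" using B \<open>1 \<le> m\<close> by auto
  then have "k \<in> B" using Max_in[OF B(1)] by (simp add: k_def)
  then have k: "K \<le> k" "descent k" "1 \<le> k" using B(3) assms(2) by auto
  have "B \<subseteq> descents k"
    using B assms(2) Max_ge[OF B(1)] by (auto simp: desc_set_def k_def)
  then have window: "K \<le> j" if "j \<in> recent m (descents k)" for j
    using ge_of_mem_recent[OF finite_desc_set _ B(2) _ that] B(3) by blast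
  have "recent m (descents k) \<noteq> {}"
    using RM_window_contains_descent[OF assms(1) k(3,2)] by blast
  moreover have "res T (x (Suc j)) \<le> \<alpha> * \<mu> K" if "j \<in> recent m (descents k)" for j
  proof -
    have "descent j" using that by (simp add: recent_def desc_set_def)
    then have "res T (x (Suc j)) \<le> \<alpha> * \<mu> j" by (simp add: suff_desc_def)
    also have "\<dots> \<le> \<alpha> * \<mu> K" using mu_antimono[OF assms(2) window[OF that]] alpha_pos by simp
    finally show ?thesis .
  qed
  ultimately have "\<mu> (Suc k) \<le> \<alpha> * \<mu> K"
    using assms(1) k by (simp add: mu_Suc next_mu_def finite_recent finite_desc_set)
  then show ?thesis using k(1) by blast
qed

lemma card_descents_unbounded: "\<exists>k. M \<le> card (descents k)"
proof -
  obtain B where B: "finite B" "card B = M" "B \<subseteq> {j. 1 \<le> j \<and> descent j}"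
    using infinite_arbitrarily_large[OF infinite_descents_beyond] by blast
  then have "B \<subseteq> descents (Max B)"
    using Max_ge[OF B(1)] by (auto simp: desc_set_def)
  then show ?thesis using card_mono[OF finite_desc_set] B(2) by blast
qed

lemma AA_mu_tendsto_0:
  assumes "s = AA"
  shows "\<mu> \<longlonglongrightarrow> 0"
proof -
  obtain l where l: "\<mu> \<longlonglongrightarrow> l" "0 \<le> l" "\<forall>k\<ge>1. l \<le> \<mu> k"
    using mu_converges by blast
  have "l = 0"
  proof (rule ccontr)
    assume "l \<noteq> 0"
    then have pos: "0 < (1 - \<alpha>) * l" using l(2) alpha_lt_1 by simp
    obtain N where N: "\<And>n. N \<le> n \<Longrightarrow> \<mu> 1 / ((1 - \<alpha>) * l) + 1 \<le> (harm n :: real)"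
      using harm_at_top unfolding filterlim_at_top eventually_sequentially by blast
    obtain k where k: "N \<le> card (descents k)" using card_descents_unbounded by blast
    have "(1 - \<alpha>) * l * harm (card (descents k)) \<le> \<mu> 1"
      using AA_harmonic_bound[OF assms l(3), of "Suc k"] mu_nonneg[of "Suc k"] by simp
    then have "harm (card (descents k)) \<le> \<mu> 1 / ((1 - \<alpha>) * l)"
      using pos by (simp add: le_divide_eq mult.commute)
    then show False using N[OF k] by simp
  qed
  then show ?thesis using l(1) by simp
qed

theorem mu_tendsto_0: "\<mu> \<longlonglongrightarrow> 0"
proof (cases s)
  case (GS \<theta>)
  then show ?thesis
    using mu_tendsto_0_if_contracting GS_contracting valid by (auto simp: valid_scheme_def)
next
  case RT
  then show ?thesis using mu_tendsto_0_if_contracting RT_contracting alpha_lt_1 by blast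
next
  case AA
  then show ?thesis by (rule AA_mu_tendsto_0)
next
  case (EMA \<theta>)
  then have "1 - \<theta> * (1 - \<alpha>) < 1" using valid alpha_lt_1 by (simp add: valid_scheme_def)
  then show ?thesis using mu_tendsto_0_if_contracting EMA_contracting EMA by blast
next
  case (RM m)
  then show ?thesis using mu_tendsto_0_if_contracting RM_contracting alpha_lt_1 by blast
qed

theorem res_tendsto_0: "(\<lambda>k. res T (x k)) \<longlonglongrightarrow> 0"
proof (rule LIMSEQ_I)
  fix e :: real assume "0 < e"
  obtain K where K: "\<And>k. K \<le> k \<Longrightarrow> \<mu> k < e"
    using LIMSEQ_D[OF mu_tendsto_0 \<open>0 < e\<close>] mu_nonneg by fastforce
  obtain d where d: "K \<le> d" "1 \<le> d" "descent d" using descent_beyond by blast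
  have "res T (x k) < e" if "Suc d \<le> k" for k
    using that
  proof (induction k rule: dec_induct)
    case base
    have "\<alpha> * \<mu> d \<le> \<mu> d"
      using mu_nonneg[OF d(2)] alpha_pos alpha_lt_1 by (simp add: mult_left_le_one_le)
    then show ?case using d K[of d] by (simp add: suff_desc_def)
  next
    case (step k)
    have "\<alpha> * \<mu> k \<le> \<mu> k"
      using mu_nonneg[of k] step(1) alpha_pos alpha_lt_1 by (simp add: mult_left_le_one_le)
    then show ?case using res_Suc_le[of k] K[of k] step d by simp
  qed
  then show "\<exists>no. \<forall>n\<ge>no. norm (res T (x n) - 0) < e" using res_nonneg[of T] by auto
qed

end

theorem corollary1:
  fixes T :: "real^'n \<Rightarrow> real^'n"
    and L :: "nat \<Rightarrow> real^'n \<Rightarrow> real^'n"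
    and \<alpha> :: real and s :: scheme
    and x y :: "nat \<Rightarrow> real^'n" and \<mu> :: "nat \<Rightarrow> real"
  assumes "averaged T"
    and "Fix T \<noteq> {}"
    and "filterlim (\<lambda>z. norm (z - T z)) at_top at_infinity"
    and "0 < \<alpha>" and "\<alpha> < 1"
    and "valid_scheme s"
    and "safe_l2o T L \<alpha> s x y \<mu>"
    and "\<exists>\<^sub>F k in sequentially. norm (y k - T (y k)) \<le> \<alpha> * \<mu> k"
  shows "\<mu> \<longlonglongrightarrow> 0
    \<and> (\<lambda>k. infdist (x k) (Fix T)) \<longlonglongrightarrow> 0
    \<and> ((\<exists>!p. \<exists>r::nat \<Rightarrow> nat. strict_mono r \<and> (x \<circ> r) \<longlonglongrightarrow> p)
         \<longrightarrow> (\<exists>p\<in>Fix T. x \<longlonglongrightarrow> p))"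
proof -
  interpret safe_l2o_run T L \<alpha> s x y \<mu>
    using assms by unfold_locales
  interpret safe_l2o_descending T L \<alpha> s x y \<mu>
    using frequent_descent_if_frequently_accepted assms(8) by unfold_locales (simp add: res_def)
  have res: "(\<lambda>k. norm (x k - T (x k))) \<longlonglongrightarrow> 0"
    using res_tendsto_0 by (simp add: res_def)
  have bounded: "bounded (range x)"
    using bounded_range_if_coercive[OF assms(3) res] .
  have "continuous_on UNIV (\<lambda>z. norm (z - T z))"
    using averaged_imp_continuous_on[OF assms(1)] by (intro continuous_intros)
  then have limit_fix: "q \<in> Fix T" if "strict_mono r" "(x \<circ> r) \<longlonglongrightarrow> q" for r q
    using limit_point_in_zero_set[OF _ res that] by (simp add: Fix_def)
  have "(\<lambda>k. infdist (x k) (Fix T)) \<longlonglongrightarrow> 0"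
    using limit_fix infdist_nonneg
    by (intro tendsto_0_if_vanishes_at_limit_points[OF bounded] continuous_intros) auto
  moreover have "\<exists>p\<in>Fix T. x \<longlonglongrightarrow> p"
    if "\<exists>!p. \<exists>r::nat \<Rightarrow> nat. strict_mono r \<and> (x \<circ> r) \<longlonglongrightarrow> p"
    using that limit_fix tendsto_if_unique_limit_point[OF bounded] by metis
  ultimately show ?thesis using mu_tendsto_0 by blast
qed

end
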